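(* Assume: (a) $\mu>\mathrm{cf}(\mu)=\theta$, $\kappa=\mu^+$, $2^\theta<\kappa$; (b) $\mathcal{A}=\{A_\alpha:\alpha\in\kappa\}$ is $\mu$-scattered, i.e. each $A_\alpha\subseteq\mu$ has $|A_\alpha|=\theta$, and whenever $I\in[\kappa]^\kappa$ and $a_\alpha\subseteq A_\alpha$ with $|a_\alpha|=\theta$ for $\alpha\in I$, then $|\bigcup\{a_\alpha:\alpha\in I\}|=\mu$; (c) $\chi<\theta$ and $\binom{\theta^+}{\theta}\rightarrow\binom{\theta}{\theta}_\chi$. Then $\binom{\mu}{\theta^+}\rightarrow\binom{\mu}{\theta}_\chi$. If one assumes the stronger $\binom{\theta^+}{\theta}\rightarrow\binom{\theta^+}{\theta}_\chi$ and $2^{\theta^+}<\kappa$, then $\binom{\mu}{\theta^+}\rightarrow\binom{\mu}{\theta^+}_\chi$.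
   Context: Notation: $\binom{\lambda}{\kappa}\rightarrow\binom{\alpha}{\beta}_\chi$ means that for every coloring $c:\lambda\times\kappa\rightarrow\chi$ there are $A\subseteq\lambda$, $B\subseteq\kappa$ with $\mathrm{otp}(A)=\alpha$, $\mathrm{otp}(B)=\beta$ and $c\upharpoonright(A\times B)$ constant. *)

theory Defs
  imports Main
begin

text \<open>Cardinals/ordinals are represented, as in HOL's BNF cardinal library, by
well-order relations (cardinals: relations r with Card_order r); the ordinal
is the field of the relation.\<close>

definition otp_is :: "'a rel \<Rightarrow> 'a set \<Rightarrow> 'b rel \<Rightarrow> bool" where
  "otp_is r A alpha \<longleftrightarrow> (Restr r A, alpha) \<in> ordIso"

definition cf_is :: "'a rel \<Rightarrow> 'b rel \<Rightarrow> bool" where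
  "cf_is mu theta \<longleftrightarrow>
     (\<exists>K. K \<subseteq> Field mu \<and> cofinal K mu \<and> (card_of K, theta) \<in> ordIso) \<and>
     (\<forall>K. K \<subseteq> Field mu \<and> cofinal K mu \<longrightarrow> (theta, card_of K) \<in> ordLeq)"

definition polarized :: "'a rel \<Rightarrow> 'b rel \<Rightarrow> 'c rel \<Rightarrow> 'd rel \<Rightarrow> 'e rel \<Rightarrow> bool" where
  "polarized lam kap alpha beta chi \<longleftrightarrow>
     (\<forall>c :: 'a \<Rightarrow> 'b \<Rightarrow> 'e.
        (\<forall>x\<in>Field lam. \<forall>y\<in>Field kap. c x y \<in> Field chi) \<longrightarrow>
        (\<exists>A B i. A \<subseteq> Field lam \<and> B \<subseteq> Field kap \<and>
            otp_is lam A alpha \<and> otp_is kap B beta \<and>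
            (\<forall>x\<in>A. \<forall>y\<in>B. c x y = i)))"

definition mu_scattered :: "'a rel \<Rightarrow> 'a rel \<Rightarrow> 'a rel \<Rightarrow> ('a \<Rightarrow> 'a set) \<Rightarrow> bool" where
  "mu_scattered mu theta kappa A \<longleftrightarrow>
     (\<forall>\<alpha>\<in>Field kappa. A \<alpha> \<subseteq> Field mu \<and> (card_of (A \<alpha>), theta) \<in> ordIso) \<and>
     (\<forall>I a. I \<subseteq> Field kappa \<and> (card_of I, kappa) \<in> ordIso \<and>
            (\<forall>\<alpha>\<in>I. a \<alpha> \<subseteq> A \<alpha> \<and> (card_of (a \<alpha>), theta) \<in> ordIso)
            \<longrightarrow> (card_of (\<Union>\<alpha>\<in>I. a \<alpha>), mu) \<in> ordIso)"

end

theory Submission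
  imports Defs
begin

(* Let beta be theta (first claim) or theta^+ (second claim). Given a colouring c of mu x theta^+,
   apply the hypothesis on theta^+ x theta, for each alpha < kappa, to c restricted to A_alpha x
   theta^+ (A_alpha has size theta). This gives a_alpha in A_alpha of size theta, B_alpha in
   theta^+ of order type beta and a colour i_alpha with c constant on a_alpha x B_alpha. There are
   fewer than kappa candidate pairs (B_alpha, i_alpha): at most 2^theta when beta = theta, because
   theta^+ <= 2^theta, and at most 2^(theta^+) in general. Since kappa = mu^+ is regular, one pair
   (B, i) occurs for kappa many alpha. By scatteredness the union of the corresponding a_alpha has
   size mu, so it has order type mu, and c is constantly i on it times B. *)

unbundle cardinal_syntax

lemma cofinal_infinite:
  assumes wo: "Well_order r" and cof: "cofinal K r" and K: "K \<subseteq> Field r"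
    and ne: "Field r \<noteq> {}"
  shows "infinite K"
proof
  assume fin: "finite K"
  let ?R = "(Restr r K)\<inverse> - Id"
  have "finite ((Restr r K)\<inverse>)" using fin by (simp add: finite_subset[of _ "K \<times> K"])
  moreover have "Partial_order (Restr r K)"
    using wo Partial_order_Restr unfolding well_order_on_def linear_order_on_def by blast
  ultimately have wf: "wf ?R"
    using partial_order_on_well_order_on partial_order_on_converse by blast
  obtain k where "k \<in> K" using cof ne unfolding cofinal_def by blast
  then obtain m where m: "m \<in> K" and min: "\<And>y. (y, m) \<in> ?R \<Longrightarrow> y \<notin> K"
    using wfE_min[OF wf] by metis
  obtain b where "b \<in> K" "m \<noteq> b" "(m, b) \<in> r" using cof K m unfolding cofinal_def by blast
  thus False using min m by blast
qed

lemma ordLess_Field_nonempty: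
  assumes "r <o r'"
  shows "Field r' \<noteq> {}"
proof
  assume "Field r' = {}"
  hence "embed r' r (\<lambda>_. undefined)" unfolding embed_def by simp
  thus False using assms ordLess_iff by blast
qed

lemma ordLess_infinite_Field:
  assumes "r <o r'" and "infinite (Field r)"
  shows "infinite (Field r')"
  using card_of_ordLeq_infinite[OF card_of_mono2[OF ordLess_imp_ordLeq[OF assms(1)]] assms(2)] .

lemma cf_is_infinite:
  assumes "Well_order mu" and "Field mu \<noteq> {}" and "Card_order theta" and "cf_is mu theta"
  shows "infinite (Field theta)"
proof -
  obtain K where K: "K \<subseteq> Field mu" "cofinal K mu" "|K| =o theta"
    using assms(4) unfolding cf_is_def by blast
  have "infinite K" using cofinal_infinite[OF assms(1) K(2,1) assms(2)] .
  thus ?thesis using card_of_ordIso_finite_Field[OF assms(3) ordIso_symmetric[OF K(3)]] by simp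
qed

lemma strict_mono_on_Field_inflationary:
  assumes wo: "Well_order r" and f: "\<forall>x\<in>Field r. f x \<in> Field r"
    and mono: "\<forall>x\<in>Field r. \<forall>y\<in>Field r. (x, y) \<in> r \<and> x \<noteq> y \<longrightarrow> (f x, f y) \<in> r \<and> f x \<noteq> f y"
    and x: "x \<in> Field r"
  shows "(x, f x) \<in> r"
proof -
  have "wf (r - Id)" using wo unfolding well_order_on_def by blast
  from this x show ?thesis
  proof (induction x rule: wf_induct_rule)
    case (less x)
    show ?case
    proof (rule ccontr)
      assume "(x, f x) \<notin> r"
      have fx: "f x \<in> Field r" using f less.prems by blast
      have "(f x, x) \<in> r" "f x \<noteq> x"
        using \<open>(x, f x) \<notin> r\<close> wo fx less.prems unfolding order_on_defs total_on_def refl_on_def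
        by metis+
      hence "(f x, f (f x)) \<in> r" using less.IH fx by blast
      moreover have "(f (f x), f x) \<in> r" "f (f x) \<noteq> f x"
        using mono \<open>(f x, x) \<in> r\<close> \<open>f x \<noteq> x\<close> fx less.prems by auto
      ultimately show False using wo unfolding order_on_defs antisym_def by blast
    qed
  qed
qed

lemma Restr_ordLeq:
  assumes wo: "Well_order r"
  shows "Restr r U \<le>o r"
proof (rule ccontr)
  have woU: "Well_order (Restr r U)" using Well_order_Restr[OF wo] .
  assume "\<not> Restr r U \<le>o r"
  hence "r <o Restr r U" using not_ordLeq_iff_ordLess[OF wo woU] by simp
  then obtain a where a: "a \<in> Field (Restr r U)"
    and "r =o Restr (Restr r U) (underS (Restr r U) a)"
    using ordLess_iff_ordIso_Restr[OF woU wo] by blast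
  then obtain g where g: "iso r (Restr (Restr r U) (underS (Restr r U) a)) g"
    unfolding ordIso_def by blast
  \<comment> \<open>g maps all of r strictly below a, but strictly increasing self-maps are inflationary.\<close>
  have below_a: "g x \<in> Field r \<and> (g x, a) \<in> r \<and> g x \<noteq> a" if "x \<in> Field r" for x
  proof -
    have "g x \<in> Field (Restr (Restr r U) (underS (Restr r U) a))"
      using iso_Field[OF g] imageI[OF that, of g] by simp
    hence "g x \<in> underS (Restr r U) a" by (rule subsetD[OF Field_Restr_subset])
    hence "(g x, a) \<in> r" "g x \<noteq> a" by (simp_all add: underS_def)
    thus ?thesis by (simp add: FieldI1)
  qed
  have mono: "(g x, g y) \<in> r \<and> g x \<noteq> g y"
    if "x \<in> Field r" "y \<in> Field r" "(x, y) \<in> r" "x \<noteq> y" for x y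
  proof
    show "(g x, g y) \<in> r" using iso_forward[OF that(3) g] by simp
    show "g x \<noteq> g y" using iso_imp_inj_on[OF g] that unfolding inj_on_def by blast
  qed
  have aF: "a \<in> Field r" using a by (auto simp: Field_def)
  have "(a, g a) \<in> r"
    by (rule strict_mono_on_Field_inflationary[OF wo _ _ aF]) (use below_a mono in blast)+
  thus False using below_a[OF aF] wo unfolding order_on_defs antisym_def by blast
qed

lemma otp_is_card_of:
  assumes "Well_order r" and "B \<subseteq> Field r" and "otp_is r B beta"
  shows "|B| =o |Field beta|"
proof -
  have "Field (Restr r B) = B"
    using Refl_Field_Restr2[of r B] assms(1,2) unfolding order_on_defs by auto
  thus ?thesis using card_of_cong assms(3) unfolding otp_is_def by metis
qed

lemma otp_is_self:
  assumes "Card_order r" and "U \<subseteq> Field r" and "|U| =o r"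
  shows "otp_is r U r"
proof -
  have wo: "Well_order r" using assms(1) by (simp add: card_order_on_well_order_on)
  have "|U| \<le>o Restr r U" using card_of_least well_order_on_Restr[OF wo assms(2)] .
  hence "r \<le>o Restr r U" using assms(3) ordIso_symmetric ordIso_ordLeq_trans by blast
  thus ?thesis using Restr_ordLeq[OF wo] ordIso_iff_ordLeq unfolding otp_is_def by blast
qed

lemma regularCard_pigeonhole:
  assumes reg: "regularCard k" and inf: "Cinfinite k"
    and I: "|I| =o k" and g: "g ` I \<subseteq> T" and T: "|T| <o k"
  obtains t where "t \<in> T" and "|{x\<in>I. g x = t}| =o k"
proof -
  have "\<exists>t\<in>T. \<not> |{x\<in>I. g x = t}| <o k"
  proof (rule ccontr)
    assume "\<not> ?thesis"
    hence "\<forall>t\<in>T. |{x\<in>I. g x = t}| <o k" by blast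
    hence "|\<Union>t\<in>T. {x\<in>I. g x = t}| <o k"
      by (rule card_of_UNION_ordLess_infinite_Field_regularCard[OF reg inf T])
    moreover have "(\<Union>t\<in>T. {x\<in>I. g x = t}) = I" using g by auto
    ultimately have "|I| <o k" by simp
    thus False using not_ordLess_ordIso I by blast
  qed
  then obtain t where t: "t \<in> T" and not_small: "\<not> |{x\<in>I. g x = t}| <o k" ..
  have "|{x\<in>I. g x = t}| \<le>o k" by (rule ordLeq_ordIso_trans[OF card_of_mono1 I]) auto
  hence "|{x\<in>I. g x = t}| =o k" using not_small ordLeq_iff_ordLess_or_ordIso by blast
  with t show thesis by (rule that)
qed

lemma card_of_Pow_mono:
  assumes "|A| \<le>o |B|"
  shows "|Pow A| \<le>o |Pow B|"
proof -
  obtain f where "inj_on f A" "f ` A \<subseteq> B" using card_of_ordLeq[THEN iffD2, OF assms] by blast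
  hence "inj_on (image f) (Pow A) \<and> image f ` Pow A \<subseteq> Pow B" using inj_on_image_Pow by blast
  thus ?thesis using card_of_ordLeq by blast
qed

lemma card_of_small_subsets_ordLeq_Pow:
  fixes T :: "'a set" and P :: "'b set"
  assumes T: "infinite T" and P: "|P| \<le>o |Pow T|"
  shows "|{B. B \<subseteq> P \<and> |B| \<le>o |T|}| \<le>o |Pow T|"
proof -
  let ?S = "{B. B \<subseteq> P \<and> |B| \<le>o |T|}"
  obtain h where h: "inj_on h P" "h ` P \<subseteq> Pow T" using card_of_ordLeq[THEN iffD2, OF P] by blast
  define e :: "'b set \<Rightarrow> 'b \<Rightarrow> 'a" where "e B = (SOME e. inj_on e B \<and> e ` B \<subseteq> T)" for B
  have e: "inj_on (e B) B \<and> e B ` B \<subseteq> T" if "B \<in> ?S" for B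
  proof -
    have "\<exists>e. inj_on e B \<and> e ` B \<subseteq> T" using that card_of_ordLeq by blast
    thus ?thesis unfolding e_def by (rule someI_ex)
  qed
  \<comment> \<open>Injectivity of e B and of h lets B be read off from e B ` B and the graph of h along e B.\<close>
  define code where "code B = (e B ` B, {(e B b, z) | b z. b \<in> B \<and> z \<in> h b})" for B
  define decode :: "'a set \<times> ('a \<times> 'a) set \<Rightarrow> 'b set"
    where "decode D = {b \<in> P. \<exists>t\<in>fst D. h b = {z. (t, z) \<in> snd D}}" for D
  have row: "{z. (e B b, z) \<in> snd (code B)} = h b" if "B \<in> ?S" "b \<in> B" for B b
    using e[OF that(1)] that(2) unfolding code_def inj_on_def by auto
  have "decode (code B) = B" if B: "B \<in> ?S" for B
  proof
    show "decode (code B) \<subseteq> B"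
    proof
      fix b assume "b \<in> decode (code B)"
      then obtain b' where "b \<in> P" "b' \<in> B" "h b = h b'"
        using row[OF B] unfolding decode_def code_def by auto
      thus "b \<in> B" using h(1) B unfolding inj_on_def by auto
    qed
    show "B \<subseteq> decode (code B)"
      using row[OF B] B unfolding decode_def code_def by auto
  qed
  hence "inj_on code ?S" by (rule inj_on_inverseI)
  moreover have "code ` ?S \<subseteq> Pow T \<times> Pow (T \<times> T)"
    using e h(2) unfolding code_def by blast
  ultimately have "|?S| \<le>o |Pow T \<times> Pow (T \<times> T)|" using card_of_ordLeq by blast
  also have "|Pow T \<times> Pow (T \<times> T)| \<le>o |Pow T|"
  proof (rule card_of_Times_ordLeq_infinite_Field[of "|Pow T|", unfolded Field_card_of])
    show "|Pow (T \<times> T)| \<le>o |Pow T|"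
      using card_of_Pow_mono card_of_Times_same_infinite[OF T] ordIso_iff_ordLeq by blast
  qed (use T in \<open>auto intro: ordLeq_reflexive card_of_Well_order card_of_card_order_on\<close>)
  finally show ?thesis .
qed

lemma polarized_homogeneous_rectangle:
  fixes c :: "'x \<Rightarrow> 'b \<Rightarrow> 'e" and thetap :: "'b rel" and theta :: "'t rel"
  assumes pol: "polarized thetap theta beta theta chi"
    and theta: "Card_order theta" "Field theta \<noteq> {}"
    and thetap: "Well_order thetap" and beta: "Field beta \<noteq> {}"
    and X: "|X| =o theta" and c: "\<forall>x\<in>X. \<forall>y\<in>Field thetap. c x y \<in> Field chi"
  obtains a B i where "a \<subseteq> X" "|a| =o theta" "B \<subseteq> Field thetap" "otp_is thetap B beta"
    "i \<in> Field chi" "\<forall>x\<in>a. \<forall>y\<in>B. c x y = i"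
proof -
  have woth: "Well_order theta" using theta(1) by (simp add: card_order_on_well_order_on)
  have "|Field theta| =o |X|"
    using card_of_Field_ordIso[OF theta(1)] X ordIso_symmetric ordIso_transitive by blast
  then obtain f where f: "bij_betw f (Field theta) X" using card_of_ordIso by blast
  have "\<forall>y\<in>Field thetap. \<forall>x\<in>Field theta. c (f x) y \<in> Field chi"
    using c f unfolding bij_betw_def by auto
  \<comment> \<open>The hypothesis colours thetap x theta, so it is applied to c transposed and pulled back along f.\<close>
  then obtain B A' i where B: "B \<subseteq> Field thetap" "otp_is thetap B beta"
    and A': "A' \<subseteq> Field theta" "otp_is theta A' theta"
    and hom: "\<forall>y\<in>B. \<forall>x\<in>A'. c (f x) y = i"
    using pol unfolding polarized_def by (elim allE[of _ "\<lambda>y x. c (f x) y"]) blast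
  have cardA': "|A'| =o |Field theta|" using otp_is_card_of[OF woth A'] .
  have cardB: "|B| =o |Field beta|" using otp_is_card_of[OF thetap B] .
  have "A' \<noteq> {}" using cardA' theta(2) by (metis card_of_empty2 ordIso_symmetric)
  moreover have "B \<noteq> {}" using cardB beta by (metis card_of_empty2 ordIso_symmetric)
  ultimately obtain x y where x: "x \<in> A'" and y: "y \<in> B" by blast
  have "f x \<in> X" using x A'(1) f unfolding bij_betw_def by blast
  hence "c (f x) y \<in> Field chi" using c y B(1) by blast
  moreover have "c (f x) y = i" using hom x y by blast
  ultimately have i: "i \<in> Field chi" by simp
  have "|f ` A'| =o |A'|"
    using card_of_ordIso bij_betw_subset[OF f A'(1)] ordIso_symmetric by blast
  hence "|f ` A'| =o theta"
    using cardA' card_of_Field_ordIso[OF theta(1)] ordIso_transitive by blast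
  moreover have "f ` A' \<subseteq> X" using f A'(1) unfolding bij_betw_def by blast
  moreover have "\<forall>x\<in>f ` A'. \<forall>y\<in>B. c x y = i" using hom by blast
  ultimately show thesis using that B i by blast
qed

lemma polarized_of_mu_scattered:
  assumes mu: "Card_order mu" and theta: "Card_order theta" "Field theta \<noteq> {}"
    and thetap: "Well_order thetap" and beta: "Field beta \<noteq> {}"
    and kappa: "regularCard kappa" "Cinfinite kappa"
    and scat: "mu_scattered mu theta kappa A"
    and pol: "polarized thetap theta beta theta chi"
    and few_blocks: "|{B. B \<subseteq> Field thetap \<and> otp_is thetap B beta}| <o kappa"
    and few_colours: "|Field chi| <o kappa"
  shows "polarized mu thetap mu beta chi"
  unfolding polarized_def
proof (intro allI impI)
  fix c
  assume c: "\<forall>x\<in>Field mu. \<forall>y\<in>Field thetap. c x y \<in> Field chi"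
  let ?S = "{B. B \<subseteq> Field thetap \<and> otp_is thetap B beta}"
  define homogeneous where "homogeneous \<alpha> a B i \<longleftrightarrow>
    a \<subseteq> A \<alpha> \<and> |a| =o theta \<and> B \<in> ?S \<and> i \<in> Field chi \<and> (\<forall>x\<in>a. \<forall>y\<in>B. c x y = i)"
    for \<alpha> a B i
  have "\<exists>a B i. homogeneous \<alpha> a B i" if "\<alpha> \<in> Field kappa" for \<alpha>
  proof -
    have A: "A \<alpha> \<subseteq> Field mu" "|A \<alpha>| =o theta" using scat that unfolding mu_scattered_def by auto
    hence "\<forall>x\<in>A \<alpha>. \<forall>y\<in>Field thetap. c x y \<in> Field chi" using c by blast
    then obtain a B i where "a \<subseteq> A \<alpha>" "|a| =o theta" "B \<subseteq> Field thetap" "otp_is thetap B beta"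
      "i \<in> Field chi" "\<forall>x\<in>a. \<forall>y\<in>B. c x y = i"
      by (rule polarized_homogeneous_rectangle[OF pol theta thetap beta A(2)])
    thus ?thesis unfolding homogeneous_def by blast
  qed
  then obtain a B i where abi: "\<forall>\<alpha>\<in>Field kappa. homogeneous \<alpha> (a \<alpha>) (B \<alpha>) (i \<alpha>)"
    by metis
  have "|Field kappa| =o kappa"
    using card_of_Field_ordIso kappa(2) unfolding cinfinite_def by blast
  moreover have "B ` Field kappa \<subseteq> ?S" using abi unfolding homogeneous_def by blast
  ultimately obtain B0 where B0: "B0 \<in> ?S" and J1: "|{\<alpha>\<in>Field kappa. B \<alpha> = B0}| =o kappa"
    by (rule regularCard_pigeonhole[OF kappa _ _ few_blocks])
  have "i ` {\<alpha>\<in>Field kappa. B \<alpha> = B0} \<subseteq> Field chi" using abi unfolding homogeneous_def by blast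
  then obtain i0 where J: "|{\<alpha>\<in>{\<alpha>\<in>Field kappa. B \<alpha> = B0}. i \<alpha> = i0}| =o kappa"
    by (rule regularCard_pigeonhole[OF kappa J1 _ few_colours])
  define J where "J = {\<alpha>\<in>{\<alpha>\<in>Field kappa. B \<alpha> = B0}. i \<alpha> = i0}"
  have J_sub: "J \<subseteq> Field kappa" unfolding J_def by blast
  have J_blocks: "\<forall>\<alpha>\<in>J. a \<alpha> \<subseteq> A \<alpha> \<and> |a \<alpha>| =o theta"
    using abi J_sub unfolding homogeneous_def by blast
  define U where "U = (\<Union>\<alpha>\<in>J. a \<alpha>)"
  have U_sub: "U \<subseteq> Field mu"
    using scat J_sub J_blocks unfolding mu_scattered_def U_def by blast
  have "|U| =o mu"
    using scat J_sub J J_blocks unfolding mu_scattered_def U_def J_def by blast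
  hence "otp_is mu U mu" by (rule otp_is_self[OF mu U_sub])
  moreover have "\<forall>x\<in>U. \<forall>y\<in>B0. c x y = i0"
    using abi J_sub unfolding U_def J_def homogeneous_def by blast
  ultimately show "\<exists>A' B i. A' \<subseteq> Field mu \<and> B \<subseteq> Field thetap \<and> otp_is mu A' mu \<and>
      otp_is thetap B beta \<and> (\<forall>x\<in>A'. \<forall>y\<in>B. c x y = i)"
    using U_sub B0 by blast
qed

lemma card_of_otp_subsets_cardSuc_ordLeq_Pow:
  assumes theta: "Card_order theta" "infinite (Field theta)"
    and thetap: "Card_order thetap" "thetap =o cardSuc theta"
  shows "|{B. B \<subseteq> Field thetap \<and> otp_is thetap B theta}| \<le>o |Pow (Field theta)|"
proof -
  have "theta <o |Pow (Field theta)|"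
    using ordIso_ordLess_trans[OF ordIso_symmetric[OF card_of_Field_ordIso[OF theta(1)]] card_of_Pow] .
  hence "cardSuc theta \<le>o |Pow (Field theta)|"
    using cardSuc_ordLess_ordLeq[OF theta(1) card_of_Card_order] by blast
  hence "|Field thetap| \<le>o |Pow (Field theta)|"
    using card_of_Field_ordIso[OF thetap(1)] thetap(2) ordIso_ordLeq_trans ordIso_transitive by blast
  hence small: "|{B. B \<subseteq> Field thetap \<and> |B| \<le>o |Field theta|}| \<le>o |Pow (Field theta)|"
    by (rule card_of_small_subsets_ordLeq_Pow[OF theta(2)])
  have "{B. B \<subseteq> Field thetap \<and> otp_is thetap B theta} \<subseteq>
      {B. B \<subseteq> Field thetap \<and> |B| \<le>o |Field theta|}"
    using otp_is_card_of[of thetap] thetap(1) card_order_on_well_order_on ordIso_iff_ordLeq by blast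
  from ordLeq_transitive[OF card_of_mono1[OF this] small] show ?thesis .
qed

theorem claim3p2:
  fixes mu theta thetap kappa chi :: "'a rel"
    and A :: "'a \<Rightarrow> 'a set"
  assumes "Card_order mu" "Card_order theta" "Card_order thetap"
    and "Card_order kappa" "Card_order chi"
    and "(theta, mu) \<in> ordLess"
    and "cf_is mu theta"
    and "(kappa, cardSuc mu) \<in> ordIso"
    and "(thetap, cardSuc theta) \<in> ordIso"
    and "(card_of (Pow (Field theta)), kappa) \<in> ordLess"
    and "mu_scattered mu theta kappa A"
    and "(chi, theta) \<in> ordLess"
    and "polarized thetap theta theta theta chi"
  shows "polarized mu thetap mu theta chi \<and>
         ((polarized thetap theta thetap theta chi \<and>
           (card_of (Pow (Field thetap)), kappa) \<in> ordLess)
          \<longrightarrow> polarized mu thetap mu thetap chi)"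
proof -
  note mu = assms(1) and theta = assms(2) and thetap = assms(3) and chi = assms(5)
  have wo: "Well_order mu" "Well_order thetap"
    using mu thetap by (simp_all add: card_order_on_well_order_on)
  have theta_inf: "infinite (Field theta)"
    using cf_is_infinite[OF wo(1) ordLess_Field_nonempty[OF assms(6)] theta assms(7)] .
  have theta_thetap: "theta <o thetap"
    using ordLess_ordIso_trans[OF cardSuc_greater[OF theta] ordIso_symmetric[OF assms(9)]] .
  have "Cinfinite mu" using ordLess_infinite_Field[OF assms(6) theta_inf] mu by (simp add: cinfinite_def)
  hence kappa: "regularCard kappa" "Cinfinite kappa"
    using regularCard_ordIso Cinfinite_cong regularCard_cardSuc Cinfinite_cardSuc
      ordIso_symmetric[OF assms(8)] by blast+
  have theta_ne: "Field theta \<noteq> {}" and thetap_ne: "Field thetap \<noteq> {}"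
    using theta_inf ordLess_infinite_Field[OF theta_thetap theta_inf] by auto
  have "theta <o |Pow (Field theta)|"
    using ordIso_ordLess_trans[OF ordIso_symmetric[OF card_of_Field_ordIso[OF theta]] card_of_Pow] .
  hence few_colours: "|Field chi| <o kappa"
    using ordIso_ordLess_trans[OF card_of_Field_ordIso[OF chi] assms(12)] assms(10)
    by (blast intro: ordLess_transitive)
  have "|{B. B \<subseteq> Field thetap \<and> otp_is thetap B theta}| <o kappa"
    using card_of_otp_subsets_cardSuc_ordLeq_Pow[OF theta theta_inf thetap assms(9)] assms(10)
    by (rule ordLeq_ordLess_trans)
  hence "polarized mu thetap mu theta chi"
    by (rule polarized_of_mu_scattered[OF mu theta theta_ne wo(2) theta_ne kappa assms(11,13) _
          few_colours])
  moreover have "polarized mu thetap mu thetap chi"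
    if pol: "polarized thetap theta thetap theta chi" and Pow: "|Pow (Field thetap)| <o kappa"
  proof -
    have "|{B. B \<subseteq> Field thetap \<and> otp_is thetap B thetap}| <o kappa"
      by (rule ordLeq_ordLess_trans[OF card_of_mono1 Pow]) blast
    thus ?thesis
      by (rule polarized_of_mu_scattered[OF mu theta theta_ne wo(2) thetap_ne kappa assms(11) pol _
            few_colours])
  qed
  ultimately show ?thesis by blast
qed

end
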